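(* Let $G$ be a finite group, let $\alpha$ be an automorphism of $G$, and let $r>1$ and $s>1$ be coprime integers. For $x\in G$ and a positive integer $d$ put $N_d(x)=x\,\alpha(x)\,\alpha^2(x)\cdots\alpha^{d-1}(x)$. For a positive integer $m$ and $u,v\in G$, write $u\approx_m v$ if there is $z\in G$ with $v=z^{-1}u\,\alpha^m(z)$. Suppose $x,y\in G$ satisfy $N_r(x)\approx_r N_r(y)$ and $N_s(x)\approx_s N_s(y)$, but $N_d(x)\not\approx_d N_d(y)$ for every proper divisor $d$ of $r$ and every proper divisor $d$ of $s$. Then $|G|$ is divisible by $rs$ and $|G|\neq rs$. Furthermore, if $rs\equiv 2\pmod 4$, then $|G|$ is divisible by $2rs$.
   Context: A proper divisor of a positive integer $n$ is a positive divisor of $n$ strictly less than $n$ (so $1$ is a proper divisor of every $n>1$). The relation $\approx_m$ is the equivalence relation describing cohomologous cocycles in $H^1(\hat{\mathbb{Z}},G)$ when $1\in\hat{\mathbb{Z}}$ acts on $G$ via $\alpha^m$, cocycles being identified with their value at $1$. *)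

theory Defs
  imports "HOL-Algebra.Algebra"
begin

fun twisted_norm :: "('g, 'b) monoid_scheme \<Rightarrow> ('g \<Rightarrow> 'g) \<Rightarrow> nat \<Rightarrow> 'g \<Rightarrow> 'g" where
  "twisted_norm G \<alpha> 0 x = \<one>\<^bsub>G\<^esub>"
| "twisted_norm G \<alpha> (Suc d) x = twisted_norm G \<alpha> d x \<otimes>\<^bsub>G\<^esub> (\<alpha> ^^ d) x"

definition twisted_conj :: "('g, 'b) monoid_scheme \<Rightarrow> ('g \<Rightarrow> 'g) \<Rightarrow> nat \<Rightarrow> 'g \<Rightarrow> 'g \<Rightarrow> bool" where
  "twisted_conj G \<alpha> m u v \<longleftrightarrow>
     (\<exists>z \<in> carrier G. v = inv\<^bsub>G\<^esub> z \<otimes>\<^bsub>G\<^esub> u \<otimes>\<^bsub>G\<^esub> (\<alpha> ^^ m) z)"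

end

theory Submission
  imports Defs "HOL-Combinatorics.Permutations" "HOL-Combinatorics.Orbits"
begin

(* Put \<phi>(g) = x \<alpha>(g) y\<inverse>. Then \<phi>^m(g) = N_m(x) \<alpha>^m(g) N_m(y)\<inverse>, so N_m(x) \<approx>_m N_m(y) says exactly
   that \<phi>^m has a fixed point, and the fixed points of \<phi>^m form a left coset of the subgroup
   C_m = {h. N_m(y) \<alpha>^m(h) N_m(y)\<inverse> = h}. By the hypotheses every fixed point of \<phi>^r has exact
   period r under \<phi>, so the \<phi>-orbits cut Fix(\<phi>^r) into pieces of size r: r divides |C_r|, hence
   |G|, and likewise for s.
   If |G| = rs, then |C_r C_s| \<ge> |C_r| |C_s| / |C_r \<inter> C_s| \<ge> rs forces C_r C_s = G. This yields a
   common fixed point of \<phi>^r and \<phi>^s, i.e. a fixed point of \<phi>^gcd(r,s) = \<phi>, which the case d = 1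
   of the hypotheses excludes.
   If |G| = 2 (mod 4), the sign of the left regular representation is a character whose kernel K
   has odd order and equals {g. g^(|G|/2) = 1}, so it is preserved by \<alpha>. Either \<phi> changes the sign
   of every element, which is impossible on a \<phi>-orbit of odd length s, or it preserves the sign,
   and then r divides the odd number |C_r \<inter> K|; but one of r, s is even. *)

lemma funpow_fixed_gcd:
  assumes "(f ^^ a) z = z" and "(f ^^ b) z = z"
  shows "(f ^^ gcd a b) z = z"
proof (cases "a = 0")
  case True
  then show ?thesis using assms(2) by simp
next
  case False
  then obtain u v where uv: "a * u = b * v + gcd a b"
    using bezout_nat by blast
  have "z = (f ^^ (a * u)) z"
    using funpow_mod_eq[OF assms(1), of "a * u"] by simp
  also have "\<dots> = (f ^^ gcd a b) ((f ^^ (b * v)) z)"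
    by (simp add: uv funpow_add add.commute)
  also have "(f ^^ (b * v)) z = z"
    using funpow_mod_eq[OF assms(2), of "b * v"] by simp
  finally show ?thesis by simp
qed

lemma inj_on_funpow_exact_period:
  assumes "\<And>k. 0 < k \<Longrightarrow> k < n \<Longrightarrow> (f ^^ k) z \<noteq> z" and "(f ^^ n) z = z"
  shows "inj_on (\<lambda>k. (f ^^ k) z) {..<n}"
proof -
  have "(f ^^ i) z \<noteq> (f ^^ j) z" if "i < j" "j < n" for i j
  proof
    assume eq: "(f ^^ i) z = (f ^^ j) z"
    have "(f ^^ (n - j + i)) z = (f ^^ (n - j)) ((f ^^ j) z)"
      by (simp add: funpow_add eq)
    also have "\<dots> = z"
      using assms(2) \<open>j < n\<close> by (metis funpow_add le_add_diff_inverse2 less_imp_le o_apply)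
    finally show False
      using assms(1)[of "n - j + i"] that by linarith
  qed
  then show ?thesis
    by (intro inj_onI) (metis lessThan_iff linorder_neqE_nat)
qed

lemma orbit_eq_if_inter:
  assumes "z \<in> orbit f z" and "w \<in> orbit f w" and "orbit f z \<inter> orbit f w \<noteq> {}"
  shows "orbit f z = orbit f w"
proof -
  obtain u where u: "u \<in> orbit f z" "u \<in> orbit f w"
    using assms(3) by blast
  have "z \<in> orbit f u" "w \<in> orbit f u"
    using orbit_swap[OF assms(1) u(1)] orbit_swap[OF assms(2) u(2)] by simp_all
  then have "z \<in> orbit f w" "w \<in> orbit f z"
    using u by (auto intro: orbit_trans)
  then show ?thesis
    by (auto intro: orbit_trans)
qed

lemma exact_period_dvd_card:
  assumes "finite W" and "f ` W \<subseteq> W" and "0 < n"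
    and period: "\<And>z. z \<in> W \<Longrightarrow> (f ^^ n) z = z"
    and exact: "\<And>z k. z \<in> W \<Longrightarrow> 0 < k \<Longrightarrow> k < n \<Longrightarrow> (f ^^ k) z \<noteq> z"
  shows "n dvd card W"
proof -
  have self_in: "z \<in> orbit f z" if "z \<in> W" for z
    using period[OF that] \<open>0 < n\<close> by (auto simp: orbit_altdef intro!: exI[of _ n])
  have card_orbit: "card (orbit f z) = n" if "z \<in> W" for z
  proof -
    have "orbit f z = (\<lambda>k. (f ^^ k) z) ` {..<n}"
      using orbit_altdef_bounded[OF period[OF that] \<open>0 < n\<close>] by auto
    then show ?thesis
      using card_image[OF inj_on_funpow_exact_period[OF exact[OF that] period[OF that]]] by simp
  qed
  have orbit_sub: "orbit f z \<subseteq> W" if "z \<in> W" for z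
  proof
    fix w assume "w \<in> orbit f z"
    then show "w \<in> W"
      by induction (use that assms(2) in auto)
  qed
  have "W = \<Union> (orbit f ` W)"
    using self_in orbit_sub by blast
  moreover have "n * card (orbit f ` W) = card (\<Union> (orbit f ` W))"
  proof (rule card_partition)
    show "finite (orbit f ` W)" "finite (\<Union> (orbit f ` W))"
      using assms(1) \<open>W = \<Union> (orbit f ` W)\<close> by simp_all
    show "card c = n" if "c \<in> orbit f ` W" for c
      using that card_orbit by blast
    show "c1 \<inter> c2 = {}" if c: "c1 \<in> orbit f ` W" "c2 \<in> orbit f ` W" "c1 \<noteq> c2" for c1 c2
    proof -
      obtain z w where "z \<in> W" "w \<in> W" "c1 = orbit f z" "c2 = orbit f w"
        using c(1,2) by blast
      then show ?thesis
        using orbit_eq_if_inter[OF self_in[OF \<open>z \<in> W\<close>] self_in[OF \<open>w \<in> W\<close>]] c(3) by blast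
    qed
  qed
  ultimately show ?thesis by (metis dvd_triv_left)
qed

lemma coprime_mult_le_of_common_divisor:
  fixes r s a b d :: nat
  assumes "r dvd a" "s dvd b" "coprime r s" "d dvd a" "d dvd b" "0 < a" "0 < b"
  shows "r * s * d \<le> a * b"
proof -
  have "r dvd lcm a b" "s dvd lcm a b"
    by (rule dvd_trans[OF assms(1) dvd_lcm1], rule dvd_trans[OF assms(2) dvd_lcm2])
  then have "r * s dvd lcm a b"
    using assms(3) by (rule divides_mult)
  then have "r * s \<le> lcm a b"
    using assms(6,7) by (simp add: dvd_imp_le lcm_pos_nat)
  moreover have "d \<le> gcd a b"
    using assms(4-7) by (simp add: dvd_imp_le)
  ultimately have "r * s * d \<le> lcm a b * gcd a b"
    by (rule mult_le_mono)
  also have "\<dots> = a * b"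
    using prod_gcd_lcm_nat[of a b] by (simp only: mult.commute)
  finally show ?thesis .
qed

lemma involution_image_outside_pair:
  assumes "p permutes S" and "\<And>z. z \<in> S \<Longrightarrow> p (p z) = z" and z: "z \<in> S - {a, p a}"
  shows "p z \<in> S - {a, p a}"
proof -
  have "p z \<noteq> a"
  proof
    assume "p z = a"
    then have "z = p a"
      using assms(2) z by (metis DiffD1)
    then show False using z by simp
  qed
  moreover have "p z \<noteq> p a"
    using permutes_inj[OF assms(1)] z by (auto dest: injD)
  ultimately show ?thesis
    using permutes_in_image[OF assms(1)] z by simp
qed

lemma permutes_remove_pair:
  assumes "p permutes S" and "\<And>z. z \<in> S \<Longrightarrow> p (p z) = z" and a: "a \<in> S"
  shows "transpose a (p a) \<circ> p permutes S - {a, p a}"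
proof (rule permutes_superset)
  show "transpose a (p a) \<circ> p permutes S"
    using permutes_in_image[OF assms(1)] a
    by (intro permutes_compose[OF assms(1)] permutes_swap_id) auto
  show "(transpose a (p a) \<circ> p) z = z" if "z \<in> S - (S - {a, p a})" for z
    using that assms(2)[OF a] by auto
qed

lemma sign_fixpoint_free_involution:
  assumes "finite S" and "p permutes S"
    and "\<And>z. z \<in> S \<Longrightarrow> p (p z) = z" and "\<And>z. z \<in> S \<Longrightarrow> p z \<noteq> z"
  shows "sign p = (-1) ^ (card S div 2)"
  using assms
proof (induction "card S" arbitrary: S p rule: less_induct)
  case less
  show ?case
  proof (cases "S = {}")
    case True
    then show ?thesis using less.prems(2) by simp
  next
    case False
    then obtain a where a: "a \<in> S" by blast
    define q where "q = transpose a (p a) \<circ> p"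
    define S' where "S' = S - {a, p a}"
    have pa: "p a \<in> S" "p a \<noteq> a" "p (p a) = a"
      using a less.prems(2-4) by (simp_all add: permutes_in_image)
    have S': "p z \<in> S'" "q z = p z" if "z \<in> S'" for z
      using involution_image_outside_pair[OF less.prems(2,3) that[unfolded S'_def]]
      by (simp_all add: S'_def q_def)
    have q: "q permutes S'"
      unfolding q_def S'_def by (rule permutes_remove_pair[OF less.prems(2,3) a])
    have "card {a, p a} \<le> card S"
      using less.prems(1) a pa(1) by (intro card_mono) auto
    then have card_S: "card S = card S' + 2"
      using less.prems(1) a pa by (simp add: S'_def card_Diff_subset)
    have IH: "sign q = (-1) ^ (card S' div 2)"
    proof (rule less.hyps[OF _ _ q])
      show "card S' < card S" "finite S'"
        using card_S less.prems(1) by (auto simp: S'_def)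
      show "q (q z) = z" "q z \<noteq> z" if "z \<in> S'" for z
        using S'[OF that] S'(2)[OF S'(1)[OF that]] less.prems(3,4)[of z] that
        by (simp_all add: S'_def)
    qed
    have "permutation q"
      using less.prems(1) by (intro permutes_imp_permutation[OF _ q]) (simp add: S'_def)
    then have "sign (transpose a (p a) \<circ> q) = - sign q"
      using pa(2) by (simp add: sign_compose permutation_swap_id sign_swap_id)
    moreover have "transpose a (p a) \<circ> q = p"
      by (simp add: q_def fun_eq_iff)
    ultimately have "sign p = - sign q"
      by simp
    then show ?thesis
      using IH card_S by simp
  qed
qed

context group
begin

lemma inv_m_cancel_left [simp]: "a \<in> carrier G \<Longrightarrow> b \<in> carrier G \<Longrightarrow> inv a \<otimes> (a \<otimes> b) = b"
  by (simp add: m_assoc [symmetric])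

lemma m_inv_cancel_left [simp]: "a \<in> carrier G \<Longrightarrow> b \<in> carrier G \<Longrightarrow> a \<otimes> (inv a \<otimes> b) = b"
  by (simp add: m_assoc [symmetric])

lemma subgroup_fixed_points:
  assumes "f \<in> hom G G"
  shows "subgroup {g \<in> carrier G. f g = g} G"
proof -
  interpret group_hom G G f
    using assms by (simp add: group_hom_def group_hom_axioms_def is_group)
  show ?thesis
    by (rule subgroupI) (auto intro!: exI[of _ \<one>])
qed

lemma card_subgroup_dvd_order:
  assumes "subgroup H G"
  shows "card H dvd order G"
  using lagrange[OF assms] by (metis dvd_triv_right)

lemma card_subgroup_dvd_card_subgroup:
  assumes "subgroup H G" and "subgroup K G" and "H \<subseteq> K"
  shows "card H dvd card K"
proof -
  interpret K: group "G\<lparr>carrier := K\<rparr>"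
    by (rule subgroup.subgroup_is_group[OF assms(2) is_group])
  show ?thesis
    using K.card_subgroup_dvd_order[OF subgroup_incl[OF assms]] by (simp add: order_def)
qed

lemma pow_card_subgroup_eq_one:
  assumes "subgroup H G" and "g \<in> H"
  shows "g [^] card H = \<one>"
proof -
  interpret H: group "G\<lparr>carrier := H\<rparr>"
    by (rule subgroup.subgroup_is_group[OF assms(1) is_group])
  have "g [^]\<^bsub>G\<lparr>carrier := H\<rparr>\<^esub> order (G\<lparr>carrier := H\<rparr>) = \<one>"
    using H.pow_order_eq_1[of g] assms(2) by simp
  then show ?thesis
    by (simp add: order_def flip: nat_pow_consistent)
qed

lemma card_mult_fibre_le:
  assumes A: "subgroup A G" and B: "subgroup B G" and "finite (A \<inter> B)" and z: "z \<in> A <#> B"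
  shows "card {(h, k) \<in> A \<times> B. h \<otimes> k = z} \<le> card (A \<inter> B)"
proof -
  obtain h0 k0 where h0: "h0 \<in> A" and k0: "k0 \<in> B" and z_eq: "z = h0 \<otimes> k0"
    using z by (auto simp: set_mult_def)
  have "{(h, k) \<in> A \<times> B. h \<otimes> k = z} \<subseteq> (\<lambda>w. (h0 \<otimes> w, inv w \<otimes> k0)) ` (A \<inter> B)"
  proof (intro subsetI, elim CollectE case_prodE)
    fix p h k assume p: "p = (h, k)" and hk: "(h, k) \<in> A \<times> B \<and> h \<otimes> k = z"
    have carrier: "h \<in> carrier G" "k \<in> carrier G" "h0 \<in> carrier G" "k0 \<in> carrier G"
      using hk h0 k0 A B subgroup.mem_carrier by auto
    define w where "w = inv h0 \<otimes> h"
    have "w = inv h0 \<otimes> (h \<otimes> k) \<otimes> inv k"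
      using carrier by (simp add: w_def m_assoc)
    also have "\<dots> = k0 \<otimes> inv k"
      using carrier hk by (simp add: z_eq m_assoc)
    finally have "w \<in> B"
      using B k0 hk by (simp add: subgroup.m_closed subgroup.m_inv_closed)
    moreover have "w \<in> A"
      using A h0 hk by (simp add: w_def subgroup.m_closed subgroup.m_inv_closed)
    moreover have "h0 \<otimes> w = h" "inv w \<otimes> k0 = k"
      using carrier hk z_eq by (simp_all add: w_def inv_mult_group m_assoc inv_solve_left')
    ultimately show "p \<in> (\<lambda>w. (h0 \<otimes> w, inv w \<otimes> k0)) ` (A \<inter> B)"
      using p by force
  qed
  then have "card {(h, k) \<in> A \<times> B. h \<otimes> k = z} \<le> card ((\<lambda>w. (h0 \<otimes> w, inv w \<otimes> k0)) ` (A \<inter> B))"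
    using assms(3) by (intro card_mono) auto
  also have "\<dots> \<le> card (A \<inter> B)"
    by (rule card_image_le) (use assms(3) in simp)
  finally show ?thesis .
qed

lemma card_mult_card_le_card_set_mult:
  assumes A: "subgroup A G" and B: "subgroup B G" and fin: "finite (carrier G)"
  shows "card A * card B \<le> card (A <#> B) * card (A \<inter> B)"
proof -
  have finite: "finite A" "finite B"
    using A B fin subgroup.subset finite_subset by blast+
  define fibre where "fibre z = {(h, k) \<in> A \<times> B. h \<otimes> k = z}" for z
  have "A \<times> B = (\<Union>z \<in> A <#> B. fibre z)"
    by (auto simp: fibre_def set_mult_def)
  moreover have "finite (A <#> B)"
    using finite by (simp add: set_mult_def)
  ultimately have "card (A \<times> B) \<le> (\<Sum>z \<in> A <#> B. card (fibre z))"
    by (simp add: card_UN_le)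
  also have "\<dots> \<le> (\<Sum>z \<in> A <#> B. card (A \<inter> B))"
    using card_mult_fibre_le[OF A B] finite by (intro sum_mono) (simp add: fibre_def)
  finally show ?thesis
    by (simp add: card_cartesian_product)
qed

lemma exists_involution_if_even_card:
  assumes H: "subgroup H G" and fin: "finite (carrier G)" and even: "even (card H)"
  shows "\<exists>t \<in> H. t \<noteq> \<one> \<and> t \<otimes> t = \<one>"
proof -
  have "group (G\<lparr>carrier := H\<rparr>)"
    by (rule subgroup.subgroup_is_group[OF H is_group])
  moreover have "finite H"
    using H fin subgroup.subset finite_subset by blast
  moreover have "order (G\<lparr>carrier := H\<rparr>) = 2 ^ 1 * (card H div 2)"
    using even by (simp add: order_def)
  ultimately obtain K where K: "subgroup K (G\<lparr>carrier := H\<rparr>)" and card_K: "card K = 2"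
    using sylow_thm[of 2 "G\<lparr>carrier := H\<rparr>" 1 "card H div 2"] by auto
  have KH: "K \<subseteq> H"
    using subgroup.subset[OF K] by simp
  have one: "\<one> \<in> K"
    using subgroup.one_closed[OF K] by simp
  obtain u v where uv: "K = {u, v}" "u \<noteq> v"
    using card_K by (auto simp: card_2_iff)
  then obtain t where t: "t \<in> K" "t \<noteq> \<one>"
    by blast
  have K_eq: "K = {\<one>, t}"
    using uv one t by auto
  have "t \<otimes> t \<in> K"
    using subgroup.m_closed[OF K t(1) t(1)] by simp
  moreover have "t \<in> carrier G"
    using t(1) KH H subgroup.subset by blast
  then have "t \<otimes> t \<noteq> t"
    using t(2) by simp
  ultimately have "t \<otimes> t = \<one>"
    using K_eq by blast
  then show ?thesis
    using t KH by blast
qed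

end

section \<open>The sign of the regular representation\<close>

definition left_translation :: "('a, 'b) monoid_scheme \<Rightarrow> 'a \<Rightarrow> 'a \<Rightarrow> 'a" where
  "left_translation G g h = (if h \<in> carrier G then g \<otimes>\<^bsub>G\<^esub> h else h)"

definition regular_sign :: "('a, 'b) monoid_scheme \<Rightarrow> 'a \<Rightarrow> int" where
  "regular_sign G g = sign (left_translation G g)"

definition sign_kernel :: "('a, 'b) monoid_scheme \<Rightarrow> 'a set" where
  "sign_kernel G = {g \<in> carrier G. regular_sign G g = 1}"

context group
begin

lemma left_translation_permutes:
  assumes "g \<in> carrier G"
  shows "left_translation G g permutes carrier G"
proof (rule bij_imp_permutes)
  show "bij_betw (left_translation G g) (carrier G) (carrier G)"
  proof (rule bij_betwI[where g = "left_translation G (inv g)"])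
    show "left_translation G g \<in> carrier G \<rightarrow> carrier G"
      "left_translation G (inv g) \<in> carrier G \<rightarrow> carrier G"
      using assms by (auto simp: left_translation_def)
  qed (use assms in \<open>simp_all add: left_translation_def\<close>)
qed (simp add: left_translation_def)

lemma left_translation_mult:
  "g \<in> carrier G \<Longrightarrow> h \<in> carrier G \<Longrightarrow>
    left_translation G (g \<otimes> h) = left_translation G g \<circ> left_translation G h"
  by (simp add: left_translation_def fun_eq_iff m_assoc)

lemma regular_sign_cases: "regular_sign G g = 1 \<or> regular_sign G g = -1"
  by (simp add: regular_sign_def sign_def)

lemma regular_sign_one [simp]: "regular_sign G \<one> = 1"
proof -
  have "left_translation G \<one> = id"
    by (simp add: left_translation_def fun_eq_iff)
  then show ?thesis
    by (simp add: regular_sign_def)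
qed

context
  assumes finite_carrier: "finite (carrier G)"
begin

lemma permutation_left_translation: "g \<in> carrier G \<Longrightarrow> permutation (left_translation G g)"
  by (rule permutes_imp_permutation[OF finite_carrier left_translation_permutes])

lemma regular_sign_mult:
  "g \<in> carrier G \<Longrightarrow> h \<in> carrier G \<Longrightarrow> regular_sign G (g \<otimes> h) = regular_sign G g * regular_sign G h"
  by (simp add: regular_sign_def left_translation_mult sign_compose permutation_left_translation)

lemma regular_sign_pow: "g \<in> carrier G \<Longrightarrow> regular_sign G (g [^] n) = regular_sign G g ^ n"
  by (induction n) (simp_all add: regular_sign_mult)

lemma regular_sign_involution:
  assumes "t \<in> carrier G" and "t \<otimes> t = \<one>" and "t \<noteq> \<one>"
  shows "regular_sign G t = (-1) ^ (order G div 2)"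
  unfolding regular_sign_def order_def
proof (rule sign_fixpoint_free_involution[OF finite_carrier left_translation_permutes[OF assms(1)]])
  show "left_translation G t (left_translation G t z) = z" if "z \<in> carrier G" for z
    using that assms by (simp add: left_translation_def m_assoc [symmetric])
  show "left_translation G t z \<noteq> z" if "z \<in> carrier G" for z
    using that assms by (simp add: left_translation_def)
qed

lemma regular_sign_inv:
  assumes "g \<in> carrier G"
  shows "regular_sign G (inv g) = regular_sign G g"
proof -
  have "regular_sign G (inv g) * regular_sign G g = 1"
    using regular_sign_mult[of "inv g" g] assms by simp
  then show ?thesis
    using regular_sign_cases[of g] by auto
qed

lemma subgroup_sign_kernel: "subgroup (sign_kernel G) G"
proof (rule subgroupI)
  show "sign_kernel G \<subseteq> carrier G" "sign_kernel G \<noteq> {}"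
    by (auto simp: sign_kernel_def intro!: exI[of _ \<one>])
  show "g \<otimes> h \<in> sign_kernel G" if "g \<in> sign_kernel G" "h \<in> sign_kernel G" for g h
    using that by (simp add: sign_kernel_def regular_sign_mult)
  show "inv g \<in> sign_kernel G" if "g \<in> sign_kernel G" for g
    using that by (simp add: sign_kernel_def regular_sign_inv)
qed

lemma odd_card_subgroup_sign_kernel:
  assumes "order G mod 4 = 2" and H: "subgroup H G" and "H \<subseteq> sign_kernel G"
  shows "odd (card H)"
proof
  assume "even (card H)"
  then obtain t where t: "t \<in> H" "t \<noteq> \<one>" "t \<otimes> t = \<one>"
    using exists_involution_if_even_card[OF H finite_carrier] by blast
  have "t \<in> carrier G"
    using t(1) H subgroup.subset by blast
  moreover have "odd (order G div 2)"
    using assms(1) by presburger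
  ultimately have "regular_sign G t = -1"
    using regular_sign_involution[of t] t(2,3) by simp
  moreover have "regular_sign G t = 1"
    using t(1) assms(3) by (auto simp: sign_kernel_def)
  ultimately show False by simp
qed

lemma sign_kernel_eq_pow_half_order:
  assumes "order G mod 4 = 2"
  shows "sign_kernel G = {g \<in> carrier G. g [^] (order G div 2) = \<one>}"
proof (intro equalityI subsetI)
  fix g assume g: "g \<in> sign_kernel G"
  have odd_card: "odd (card (sign_kernel G))"
    by (rule odd_card_subgroup_sign_kernel[OF assms subgroup_sign_kernel subset_refl])
  have "order G = 2 * (order G div 2)"
    using assms by presburger
  then have "card (sign_kernel G) dvd 2 * (order G div 2)"
    using card_subgroup_dvd_order[OF subgroup_sign_kernel] by simp
  then have "card (sign_kernel G) dvd order G div 2"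
    using odd_card by (simp add: coprime_dvd_mult_right_iff)
  then obtain c where c: "order G div 2 = card (sign_kernel G) * c" ..
  have "g \<in> carrier G"
    using g by (simp add: sign_kernel_def)
  moreover have "g [^] card (sign_kernel G) = \<one>"
    by (rule pow_card_subgroup_eq_one[OF subgroup_sign_kernel g])
  ultimately show "g \<in> {g \<in> carrier G. g [^] (order G div 2) = \<one>}"
    by (simp add: c flip: nat_pow_pow)
next
  fix g assume "g \<in> {g \<in> carrier G. g [^] (order G div 2) = \<one>}"
  then have g: "g \<in> carrier G" and "g [^] (order G div 2) = \<one>"
    by simp_all
  then have "regular_sign G g ^ (order G div 2) = 1"
    by (simp flip: regular_sign_pow)
  moreover have "odd (order G div 2)"
    using assms by presburger
  ultimately show "g \<in> sign_kernel G"
    using g regular_sign_cases[of g] by (auto simp: sign_kernel_def)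
qed

lemma regular_sign_iso:
  assumes "order G mod 4 = 2" and \<alpha>: "\<alpha> \<in> iso G G" and g: "g \<in> carrier G"
  shows "regular_sign G (\<alpha> g) = regular_sign G g"
proof -
  let ?m = "order G div 2"
  have hom: "\<alpha> \<in> hom G G" and inj: "inj_on \<alpha> (carrier G)"
    using \<alpha> by (simp_all add: iso_iff)
  have "\<alpha> g [^] ?m = \<alpha> (g [^] ?m)"
    using hom_nat_pow[OF hom g is_group is_group] by simp
  moreover have "\<alpha> (g [^] ?m) = \<one> \<longleftrightarrow> g [^] ?m = \<one>"
    using inj g hom_one[OF hom is_group is_group] by (metis inj_on_eq_iff nat_pow_closed one_closed)
  ultimately have "\<alpha> g \<in> sign_kernel G \<longleftrightarrow> g \<in> sign_kernel G"
    using g hom_in_carrier[OF hom g] by (simp add: sign_kernel_eq_pow_half_order[OF assms(1)])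
  then show ?thesis
    using regular_sign_cases[of g] regular_sign_cases[of "\<alpha> g"] g hom_in_carrier[OF hom g]
    by (auto simp: sign_kernel_def)
qed

end

end

section \<open>Twisted norms\<close>

locale twisted_norms = group G for G (structure) +
  fixes \<alpha> :: "'a \<Rightarrow> 'a" and x y :: 'a
  assumes aut: "\<alpha> \<in> iso G G" and finite_carrier: "finite (carrier G)"
    and x_closed [simp]: "x \<in> carrier G" and y_closed [simp]: "y \<in> carrier G"
begin

lemma funpow_aut_closed [simp]: "a \<in> carrier G \<Longrightarrow> (\<alpha> ^^ k) a \<in> carrier G"
  using iso_imp_homomorphism[OF aut] by (induction k) (auto simp: hom_in_carrier)

lemma funpow_aut_mult [simp]:
  "a \<in> carrier G \<Longrightarrow> b \<in> carrier G \<Longrightarrow> (\<alpha> ^^ k) (a \<otimes> b) = (\<alpha> ^^ k) a \<otimes> (\<alpha> ^^ k) b"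
  using iso_imp_homomorphism[OF aut] by (induction k) (auto simp: hom_mult)

lemma funpow_aut_hom: "\<alpha> ^^ k \<in> hom G G"
  by (auto simp: hom_def)

lemma funpow_aut_inv [simp]: "a \<in> carrier G \<Longrightarrow> (\<alpha> ^^ k) (inv a) = inv ((\<alpha> ^^ k) a)"
  using group_hom.hom_inv[of G G "\<alpha> ^^ k" a] funpow_aut_hom
  by (simp add: group_hom_def group_hom_axioms_def is_group)

lemma twisted_norm_closed [simp]: "a \<in> carrier G \<Longrightarrow> twisted_norm G \<alpha> k a \<in> carrier G"
  by (induction k) (auto simp: funpow_aut_closed[of _ 1, simplified])

definition twist :: "'a \<Rightarrow> 'a" where
  "twist g = x \<otimes> \<alpha> g \<otimes> inv y"

definition twist_linear :: "nat \<Rightarrow> 'a \<Rightarrow> 'a" where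
  "twist_linear m h = twisted_norm G \<alpha> m y \<otimes> (\<alpha> ^^ m) h \<otimes> inv (twisted_norm G \<alpha> m y)"

definition twist_fixed :: "nat \<Rightarrow> 'a set" where
  "twist_fixed m = {g \<in> carrier G. (twist ^^ m) g = g}"

definition twisted_centralizer :: "nat \<Rightarrow> 'a set" where
  "twisted_centralizer m = {h \<in> carrier G. twist_linear m h = h}"

(* By twisted_conj_norm_iff, the hypothesis of the theorem on r, resp. s. *)
definition twist_primitive :: "nat \<Rightarrow> bool" where
  "twist_primitive m \<longleftrightarrow>
     twist_fixed m \<noteq> {} \<and> (\<forall>d. d dvd m \<longrightarrow> d < m \<longrightarrow> 0 < d \<longrightarrow> twist_fixed d = {})"

lemma twist_closed [simp]: "g \<in> carrier G \<Longrightarrow> twist g \<in> carrier G"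
  using funpow_aut_closed[of g 1] by (simp add: twist_def)

lemma funpow_twist_closed [simp]: "g \<in> carrier G \<Longrightarrow> (twist ^^ k) g \<in> carrier G"
  by (induction k) simp_all

lemma funpow_twist:
  "g \<in> carrier G \<Longrightarrow>
    (twist ^^ k) g = twisted_norm G \<alpha> k x \<otimes> (\<alpha> ^^ k) g \<otimes> inv (twisted_norm G \<alpha> k y)"
proof (induction k arbitrary: g)
  case 0
  then show ?case by simp
next
  case (Suc k)
  have "(twist ^^ Suc k) g = (twist ^^ k) (twist g)"
    by (simp add: funpow_Suc_right del: funpow.simps)
  also have "\<dots> = twisted_norm G \<alpha> k x \<otimes> (\<alpha> ^^ k) (twist g) \<otimes> inv (twisted_norm G \<alpha> k y)"
    using Suc by simp
  also have "\<dots> = twisted_norm G \<alpha> k x \<otimes> (\<alpha> ^^ k) (x \<otimes> \<alpha> g \<otimes> inv y) \<otimes> inv (twisted_norm G \<alpha> k y)"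
    by (simp add: twist_def)
  also have "\<dots> = twisted_norm G \<alpha> (Suc k) x \<otimes> (\<alpha> ^^ Suc k) g \<otimes> inv (twisted_norm G \<alpha> (Suc k) y)"
    using Suc.prems funpow_aut_closed[of g 1]
    by (simp add: m_assoc inv_mult_group funpow_Suc_right del: funpow.simps)
  finally show ?case .
qed

lemma twisted_conj_norm_iff:
  "twisted_conj G \<alpha> m (twisted_norm G \<alpha> m x) (twisted_norm G \<alpha> m y) \<longleftrightarrow> twist_fixed m \<noteq> {}"
proof -
  have "twisted_norm G \<alpha> m y = inv z \<otimes> twisted_norm G \<alpha> m x \<otimes> (\<alpha> ^^ m) z \<longleftrightarrow> (twist ^^ m) z = z"
    if z: "z \<in> carrier G" for z
  proof -
    let ?u = "twisted_norm G \<alpha> m x" and ?v = "twisted_norm G \<alpha> m y" and ?a = "(\<alpha> ^^ m) z"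
    have "?v = inv z \<otimes> ?u \<otimes> ?a \<longleftrightarrow> ?u \<otimes> ?a = z \<otimes> ?v"
      using inv_solve_left[of ?v z "?u \<otimes> ?a"] z by (simp add: m_assoc)
    also have "\<dots> \<longleftrightarrow> ?u \<otimes> ?a \<otimes> inv ?v = z"
      using inv_solve_right'[of z "?u \<otimes> ?a" ?v] z by simp
    finally show ?thesis
      using z by (simp add: funpow_twist)
  qed
  then show ?thesis
    by (auto simp: twisted_conj_def twist_fixed_def)
qed

lemma twist_linear_hom: "twist_linear m \<in> hom G G"
  by (rule homI) (simp_all add: twist_linear_def m_assoc)

lemma subgroup_twisted_centralizer: "subgroup (twisted_centralizer m) G"
  unfolding twisted_centralizer_def by (rule subgroup_fixed_points[OF twist_linear_hom])

lemma funpow_twist_mult: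
  "g \<in> carrier G \<Longrightarrow> h \<in> carrier G \<Longrightarrow> (twist ^^ m) (g \<otimes> h) = (twist ^^ m) g \<otimes> twist_linear m h"
  by (simp add: funpow_twist twist_linear_def m_assoc)

lemma mult_mem_twist_fixed_iff:
  assumes g: "g \<in> twist_fixed m" and h: "h \<in> carrier G"
  shows "g \<otimes> h \<in> twist_fixed m \<longleftrightarrow> h \<in> twisted_centralizer m"
  using assms hom_in_carrier[OF twist_linear_hom h, of m]
  by (auto simp: twist_fixed_def twisted_centralizer_def funpow_twist_mult)

lemma twist_fixed_eq_image:
  assumes g: "g \<in> twist_fixed m"
  shows "twist_fixed m = (\<lambda>h. g \<otimes> h) ` twisted_centralizer m"
proof (intro equalityI subsetI)
  have g_closed: "g \<in> carrier G"
    using g by (simp add: twist_fixed_def)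
  fix u assume u: "u \<in> twist_fixed m"
  then have "u \<in> carrier G"
    by (simp add: twist_fixed_def)
  then have "inv g \<otimes> u \<in> twisted_centralizer m"
    using u g_closed mult_mem_twist_fixed_iff[OF g, of "inv g \<otimes> u"] by simp
  moreover have "u = g \<otimes> (inv g \<otimes> u)"
    using g_closed \<open>u \<in> carrier G\<close> by simp
  ultimately show "u \<in> (\<lambda>h. g \<otimes> h) ` twisted_centralizer m"
    by blast
next
  fix u assume "u \<in> (\<lambda>h. g \<otimes> h) ` twisted_centralizer m"
  then show "u \<in> twist_fixed m"
    using mult_mem_twist_fixed_iff[OF g] by (auto simp: twisted_centralizer_def)
qed

lemma card_twist_fixed:
  assumes "g \<in> twist_fixed m"
  shows "card (twist_fixed m) = card (twisted_centralizer m)"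
proof -
  have "inj_on (\<lambda>h. g \<otimes> h) (twisted_centralizer m)"
    using assms inj_on_cmult[of g] by (auto simp: twist_fixed_def twisted_centralizer_def inj_on_def)
  then show ?thesis
    by (simp add: twist_fixed_eq_image[OF assms] card_image)
qed

lemma twist_image_twist_fixed: "twist ` twist_fixed m \<subseteq> twist_fixed m"
  by (auto simp: twist_fixed_def funpow_swap1[symmetric])

lemma twist_primitive_exact_period:
  assumes "twist_primitive m" and g: "g \<in> twist_fixed m" and "0 < k" "k < m"
  shows "(twist ^^ k) g \<noteq> g"
proof
  assume "(twist ^^ k) g = g"
  moreover have "(twist ^^ m) g = g"
    using g by (simp add: twist_fixed_def)
  ultimately have "g \<in> twist_fixed (gcd k m)"
    using g by (simp add: twist_fixed_def funpow_fixed_gcd)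
  moreover have "gcd k m < m"
    using gcd_le1_nat[of k m] assms(3,4) by linarith
  then have "gcd k m dvd m" "gcd k m < m" "0 < gcd k m"
    using assms(3) by simp_all
  then have "twist_fixed (gcd k m) = {}"
    using assms(1) by (simp add: twist_primitive_def)
  ultimately show False
    by simp
qed

lemma twist_primitive_dvd_card:
  assumes "twist_primitive m" and "0 < m" and W: "W \<subseteq> twist_fixed m" and "twist ` W \<subseteq> W"
  shows "m dvd card W"
proof (rule exact_period_dvd_card[OF _ assms(4,2)])
  show "finite W"
    using W finite_carrier by (auto simp: twist_fixed_def intro: finite_subset)
  show "(twist ^^ m) g = g" if "g \<in> W" for g
    using that W by (auto simp: twist_fixed_def)
  show "(twist ^^ k) g \<noteq> g" if "g \<in> W" "0 < k" "k < m" for g k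
    using twist_primitive_exact_period[OF assms(1)] that W by blast
qed

lemma twist_primitive_dvd_card_centralizer:
  assumes "twist_primitive m" and "0 < m"
  shows "m dvd card (twisted_centralizer m)"
proof -
  obtain g where "g \<in> twist_fixed m"
    using assms(1) by (auto simp: twist_primitive_def)
  then show ?thesis
    using twist_primitive_dvd_card[OF assms subset_refl twist_image_twist_fixed]
    by (simp add: card_twist_fixed)
qed

lemma twist_primitive_dvd_order:
  assumes "twist_primitive m" and "0 < m"
  shows "m dvd order G"
  using twist_primitive_dvd_card_centralizer[OF assms]
    card_subgroup_dvd_order[OF subgroup_twisted_centralizer]
  by (rule dvd_trans)

lemma set_mult_twisted_centralizers:
  assumes "0 < r" "0 < s" "coprime r s" "twist_primitive r" "twist_primitive s"
    and order: "order G = r * s"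
  shows "twisted_centralizer r <#> twisted_centralizer s = carrier G"
proof -
  let ?A = "twisted_centralizer r" and ?B = "twisted_centralizer s"
  have A: "subgroup ?A G" and B: "subgroup ?B G" and AB: "subgroup (?A \<inter> ?B) G"
    by (simp_all add: subgroup_twisted_centralizer subgroups_Inter_pair)
  have card_pos: "0 < card H" if "subgroup H G" for H
    using that finite_carrier subgroup.one_closed subgroup.subset
    by (metis card_gt_0_iff empty_iff finite_subset)
  have "r * s * card (?A \<inter> ?B) \<le> card ?A * card ?B"
    using assms(1-5) A B AB card_pos
    by (intro coprime_mult_le_of_common_divisor twist_primitive_dvd_card_centralizer
          card_subgroup_dvd_card_subgroup) auto
  also have "\<dots> \<le> card (?A <#> ?B) * card (?A \<inter> ?B)"
    by (rule card_mult_card_le_card_set_mult[OF A B finite_carrier])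
  finally have "card (carrier G) \<le> card (?A <#> ?B)"
    using card_pos[OF AB] order by (simp add: order_def)
  moreover have "?A <#> ?B \<subseteq> carrier G"
    using A B by (auto simp: set_mult_def dest: subgroup.mem_carrier)
  ultimately show ?thesis
    using finite_carrier by (metis card_seteq)
qed

lemma order_neq_mult:
  assumes "1 < r" "0 < s" "coprime r s" and r: "twist_primitive r" and s: "twist_primitive s"
  shows "order G \<noteq> r * s"
proof
  assume order: "order G = r * s"
  obtain gr gs where gr: "gr \<in> twist_fixed r" and gs: "gs \<in> twist_fixed s"
    using r s by (auto simp: twist_primitive_def)
  have closed: "gr \<in> carrier G" "gs \<in> carrier G"
    using gr gs by (simp_all add: twist_fixed_def)
  then have "inv gr \<otimes> gs \<in> twisted_centralizer r <#> twisted_centralizer s"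
    using set_mult_twisted_centralizers[OF _ assms(2-5) order] assms(1) by simp
  then obtain h k where h: "h \<in> twisted_centralizer r" and k: "k \<in> twisted_centralizer s"
    and hk: "inv gr \<otimes> gs = h \<otimes> k"
    by (auto simp: set_mult_def)
  have hk_closed: "h \<in> carrier G" "k \<in> carrier G"
    using h k by (simp_all add: twisted_centralizer_def)
  have "gs = gr \<otimes> (h \<otimes> k)"
    using hk closed by (simp flip: hk)
  then have same: "gr \<otimes> h = gs \<otimes> inv k"
    using closed hk_closed by (simp add: m_assoc)
  have "gr \<otimes> h \<in> twist_fixed r"
    using mult_mem_twist_fixed_iff[OF gr hk_closed(1)] h by simp
  moreover have "gs \<otimes> inv k \<in> twist_fixed s"
    using mult_mem_twist_fixed_iff[OF gs inv_closed[OF hk_closed(2)]] k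
      subgroup.m_inv_closed[OF subgroup_twisted_centralizer] by simp
  ultimately have "gr \<otimes> h \<in> twist_fixed (gcd r s)"
    by (simp add: same twist_fixed_def funpow_fixed_gcd)
  moreover have "twist_fixed 1 = {}"
    using r assms(1) by (simp add: twist_primitive_def)
  ultimately show False
    using assms(3) by simp
qed

lemma regular_sign_twist:
  assumes "order G mod 4 = 2" and g: "g \<in> carrier G"
  shows "regular_sign G (twist g) = regular_sign G x * regular_sign G y * regular_sign G g"
  using g regular_sign_iso[OF finite_carrier assms(1) aut g]
  by (simp add: twist_def regular_sign_mult[OF finite_carrier] regular_sign_inv[OF finite_carrier]
      hom_in_carrier[OF iso_imp_homomorphism[OF aut]])

lemma twist_fixed_sign_class:
  assumes g: "g \<in> twist_fixed m"
  shows "{u \<in> twist_fixed m. regular_sign G u = regular_sign G g}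
    = (\<lambda>h. g \<otimes> h) ` (twisted_centralizer m \<inter> sign_kernel G)"
proof -
  have closed: "g \<in> carrier G"
    using g by (simp add: twist_fixed_def)
  have "regular_sign G (g \<otimes> h) = regular_sign G g \<longleftrightarrow> regular_sign G h = 1"
    if "h \<in> carrier G" for h
    using that closed regular_sign_cases[of g] regular_sign_mult[OF finite_carrier closed that]
    by auto
  then show ?thesis
    by (auto simp: twist_fixed_eq_image[OF g] sign_kernel_def twisted_centralizer_def)
qed

lemma twist_fixed_odd_eq_empty:
  assumes order: "order G mod 4 = 2" and flip: "regular_sign G x * regular_sign G y = -1"
    and "odd s"
  shows "twist_fixed s = {}"
proof (rule ccontr)
  have sign_iter: "regular_sign G ((twist ^^ k) g) = (-1) ^ k * regular_sign G g"
    if "g \<in> carrier G" for g k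
    using that by (induction k) (simp_all add: regular_sign_twist[OF order] flip)
  assume "twist_fixed s \<noteq> {}"
  then obtain g where "g \<in> carrier G" "(twist ^^ s) g = g"
    by (auto simp: twist_fixed_def)
  then have "regular_sign G g = - regular_sign G g"
    using sign_iter[of g s] \<open>odd s\<close> by simp
  then show False
    using regular_sign_cases[of g] by simp
qed

lemma twist_primitive_odd:
  assumes order: "order G mod 4 = 2" and keep: "regular_sign G x * regular_sign G y = 1"
    and r: "twist_primitive r" and "0 < r"
  shows "odd r"
proof
  assume "even r"
  obtain g where g: "g \<in> twist_fixed r"
    using r by (auto simp: twist_primitive_def)
  then have g_closed: "g \<in> carrier G"
    by (simp add: twist_fixed_def)
  let ?W = "{u \<in> twist_fixed r. regular_sign G u = regular_sign G g}"
  let ?D = "twisted_centralizer r \<inter> sign_kernel G"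
  have "twist u \<in> ?W" if u: "u \<in> ?W" for u
  proof -
    have "twist u \<in> twist_fixed r"
      using u twist_image_twist_fixed[of r] by blast
    moreover have "regular_sign G (twist u) = regular_sign G u"
      using u regular_sign_twist[OF order, of u] keep by (simp add: twist_fixed_def)
    ultimately show ?thesis
      using u by simp
  qed
  then have "r dvd card ?W"
    by (intro twist_primitive_dvd_card[OF r \<open>0 < r\<close>]) auto
  moreover have "card ?W = card ?D"
    unfolding twist_fixed_sign_class[OF g]
    by (rule card_image, rule inj_on_subset[OF inj_on_cmult[OF g_closed]])
      (auto simp: sign_kernel_def)
  moreover have "odd (card ?D)"
    by (rule odd_card_subgroup_sign_kernel[OF finite_carrier order])
      (simp_all add: subgroups_Inter_pair subgroup_twisted_centralizer
        subgroup_sign_kernel[OF finite_carrier])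
  ultimately show False
    using \<open>even r\<close> dvd_trans[of 2 r "card ?D"] by simp
qed

lemma order_mod_4_neq_2:
  assumes "0 < r" "even r" "odd s" and r: "twist_primitive r" and s: "twist_fixed s \<noteq> {}"
  shows "order G mod 4 \<noteq> 2"
proof
  assume order: "order G mod 4 = 2"
  consider "regular_sign G x * regular_sign G y = -1" | "regular_sign G x * regular_sign G y = 1"
    using regular_sign_cases[of x] regular_sign_cases[of y] by fastforce
  then show False
    using twist_fixed_odd_eq_empty[OF order _ \<open>odd s\<close>] s
      twist_primitive_odd[OF order _ r \<open>0 < r\<close>] \<open>even r\<close>
    by cases simp_all
qed

lemma double_mult_dvd_order:
  assumes rs: "(r * s) mod 4 = 2" and "coprime r s"
    and r: "twist_primitive r" and s: "twist_primitive s" and "r * s dvd order G"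
  shows "2 * r * s dvd order G"
proof -
  obtain k where k: "order G = r * s * k"
    using assms(5) ..
  show ?thesis
  proof (cases "even k")
    case True
    then show ?thesis
      using k by (auto simp: mult_ac)
  next
    case False
    have "order G mod 4 = (r * s) mod 4 * k mod 4"
      using k by (simp add: mod_mult_left_eq)
    also have "\<dots> = 2"
      using rs False by presburger
    finally have order: "order G mod 4 = 2" .
    have pos: "0 < r" "0 < s"
      using rs by (auto intro: gr0I)
    have "even (r * s)"
      using rs by presburger
    moreover have "\<not> (even r \<and> even s)"
      using \<open>coprime r s\<close> by auto
    ultimately consider "even r" "odd s" | "odd r" "even s"
      by auto
    then show ?thesis
    proof cases
      case 1
      then show ?thesis
        using order_mod_4_neq_2[OF pos(1) 1 r] s order by (simp add: twist_primitive_def)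
    next
      case 2
      then show ?thesis
        using order_mod_4_neq_2[OF pos(2) 2(2,1) s] r order by (simp add: twist_primitive_def)
    qed
  qed
qed

end

theorem theorem6p1:
  fixes G :: "('g, 'b) monoid_scheme" and \<alpha> :: "'g \<Rightarrow> 'g" and r s :: nat and x y :: 'g
  assumes "group G" and "finite (carrier G)"
    and "\<alpha> \<in> Group.iso G G"
    and "r > 1" and "s > 1" and "coprime r s"
    and "x \<in> carrier G" and "y \<in> carrier G"
    and "twisted_conj G \<alpha> r (twisted_norm G \<alpha> r x) (twisted_norm G \<alpha> r y)"
    and "twisted_conj G \<alpha> s (twisted_norm G \<alpha> s x) (twisted_norm G \<alpha> s y)"
    and "\<And>d. d dvd r \<Longrightarrow> d < r \<Longrightarrow> d > 0 \<Longrightarrow>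
           \<not> twisted_conj G \<alpha> d (twisted_norm G \<alpha> d x) (twisted_norm G \<alpha> d y)"
    and "\<And>d. d dvd s \<Longrightarrow> d < s \<Longrightarrow> d > 0 \<Longrightarrow>
           \<not> twisted_conj G \<alpha> d (twisted_norm G \<alpha> d x) (twisted_norm G \<alpha> d y)"
  shows "r * s dvd order G \<and> order G \<noteq> r * s \<and>
         ((r * s) mod 4 = 2 \<longrightarrow> 2 * r * s dvd order G)"
proof -
  interpret twisted_norms G \<alpha> x y
    using assms(1-3,7,8) by (simp add: twisted_norms_def twisted_norms_axioms_def)
  have r: "twist_primitive r" and s: "twist_primitive s"
    using assms(9-12) by (simp_all add: twist_primitive_def twisted_conj_norm_iff)
  have "r * s dvd order G"
    using twist_primitive_dvd_order[OF r] twist_primitive_dvd_order[OF s] assms(4-6)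
    by (simp add: divides_mult)
  moreover have "order G \<noteq> r * s"
    using order_neq_mult[OF assms(4) _ assms(6) r s] assms(5) by simp
  ultimately show ?thesis
    using double_mult_dvd_order[OF _ assms(6) r s] by blast
qed

end
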